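(* Consider a discrete memoryless wiretap channel with input alphabet $\mathcal X=\{1,\ldots,n\}$, main channel $p(y|x)$ and eavesdropper channel $p(z|x)$, which is dominantly cyclic shift symmetric. Then for every $\mu\ge0$, $$\sup_{U\to V\to X\to(Y,Z)}\big[\mu I(V;Y)+I(V;Y|U)-I(V;Z|U)\big]=\max_{V\to X\to(Y,Z),\ |\mathcal V|\le n}\big[(\mu+1)I(V;Y)-I(V;Z)\big],$$ (suprema over finite-alphabet auxiliary variables), i.e. rate splitting ($U$ non-constant) does not improve the rate-equivocation region and an optimal channel prefix $V$ with at most $n$ values exists. In particular the secrecy capacity satisfies $$C_s=\max_{P_x}f(P_x)-\min_{P_x}f(P_x).$$
   Context: $f(P_x)=I(X;Y)-I(X;Z)$ for $X\sim P_x$, and $C_s=\sup_{V\to X\to(Y,Z)}[I(V;Y)-I(V;Z)]$ is the secrecy capacity. A channel with input alphabet $\{1,\ldots,n\}$ is cyclic shift symmetric if $I(X;Y)$ is invariant under cyclic shifts of the input distribution; a wiretap channel is cyclic shift symmetric if both its channels are; it is dominantly cyclic shift symmetric if moreover $f(\mathbf u)\ge f(P_x)$ for all $P_x$, with $\mathbf u$ the uniform distribution. The left-hand supremum, over $\mu\ge0$, traces the upper right boundary of the rate-equivocation region. *)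

theory Defs
  imports Complex_Main
begin

definition is_dist :: "'a set \<Rightarrow> ('a \<Rightarrow> real) \<Rightarrow> bool" where
  "is_dist A P \<longleftrightarrow> (\<forall>x\<in>A. 0 \<le> P x) \<and> sum P A = 1"

definition mi :: "'a set \<Rightarrow> 'b set \<Rightarrow> ('a \<Rightarrow> 'b \<Rightarrow> real) \<Rightarrow> real" where
  "mi A B J = (\<Sum>a\<in>A. \<Sum>b\<in>B. if J a b = 0 then 0 else
      J a b * log 2 (J a b / ((\<Sum>b'\<in>B. J a b') * (\<Sum>a'\<in>A. J a' b))))"

definition cmi :: "'c set \<Rightarrow> 'a set \<Rightarrow> 'b set \<Rightarrow> ('c \<Rightarrow> 'a \<Rightarrow> 'b \<Rightarrow> real) \<Rightarrow> real" where
  "cmi C A B J = (\<Sum>c\<in>C. \<Sum>a\<in>A. \<Sum>b\<in>B. if J c a b = 0 then 0 else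
      J c a b * log 2 (J c a b * (\<Sum>a'\<in>A. \<Sum>b'\<in>B. J c a' b') /
        ((\<Sum>b'\<in>B. J c a b') * (\<Sum>a'\<in>A. J c a' b))))"

(* A DMC with input alphabet {0..<n} (standing for {1..n}) and finite output type *)
definition channel :: "nat \<Rightarrow> (nat \<Rightarrow> 'y::finite \<Rightarrow> real) \<Rightarrow> bool" where
  "channel n W \<longleftrightarrow> (\<forall>x<n. is_dist UNIV (W x))"

definition Iin :: "nat \<Rightarrow> (nat \<Rightarrow> 'y::finite \<Rightarrow> real) \<Rightarrow> (nat \<Rightarrow> real) \<Rightarrow> real" where
  "Iin n W P = mi {0..<n} UNIV (\<lambda>x y. P x * W x y)"

definition fsec :: "nat \<Rightarrow> (nat \<Rightarrow> 'y::finite \<Rightarrow> real) \<Rightarrow> (nat \<Rightarrow> 'z::finite \<Rightarrow> real)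
    \<Rightarrow> (nat \<Rightarrow> real) \<Rightarrow> real" where
  "fsec n W Q P = Iin n W P - Iin n Q P"

definition cyclic_shift_symmetric :: "nat \<Rightarrow> (nat \<Rightarrow> 'y::finite \<Rightarrow> real) \<Rightarrow> bool" where
  "cyclic_shift_symmetric n W \<longleftrightarrow>
     (\<forall>P. is_dist {0..<n} P \<longrightarrow> (\<forall>k::nat. Iin n W (\<lambda>x. P ((x + k) mod n)) = Iin n W P))"

definition uniform_in :: "nat \<Rightarrow> nat \<Rightarrow> real" where
  "uniform_in n = (\<lambda>x. 1 / real n)"

definition dominantly_cyclic_shift_symmetric ::
  "nat \<Rightarrow> (nat \<Rightarrow> 'y::finite \<Rightarrow> real) \<Rightarrow> (nat \<Rightarrow> 'z::finite \<Rightarrow> real) \<Rightarrow> bool" where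
  "dominantly_cyclic_shift_symmetric n W Q \<longleftrightarrow>
     cyclic_shift_symmetric n W \<and> cyclic_shift_symmetric n Q \<and>
     (\<forall>P. is_dist {0..<n} P \<longrightarrow> fsec n W Q P \<le> fsec n W Q (uniform_in n))"

definition kernel :: "nat \<Rightarrow> nat \<Rightarrow> (nat \<Rightarrow> nat \<Rightarrow> real) \<Rightarrow> bool" where
  "kernel b n q \<longleftrightarrow> (\<forall>v<b. is_dist {0..<n} (q v))"

definition jointVY :: "nat \<Rightarrow> (nat \<Rightarrow> 'y::finite \<Rightarrow> real) \<Rightarrow> (nat \<Rightarrow> real) \<Rightarrow> (nat \<Rightarrow> nat \<Rightarrow> real)
    \<Rightarrow> nat \<Rightarrow> 'y \<Rightarrow> real" where
  "jointVY n W p q v y = p v * (\<Sum>x<n. q v x * W x y)"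

definition IVY :: "nat \<Rightarrow> (nat \<Rightarrow> 'y::finite \<Rightarrow> real) \<Rightarrow> nat \<Rightarrow> (nat \<Rightarrow> real) \<Rightarrow> (nat \<Rightarrow> nat \<Rightarrow> real) \<Rightarrow> real" where
  "IVY n W b p q = mi {0..<b} UNIV (jointVY n W p q)"

definition jointUVY :: "nat \<Rightarrow> (nat \<Rightarrow> 'y::finite \<Rightarrow> real) \<Rightarrow> (nat \<Rightarrow> nat \<Rightarrow> real) \<Rightarrow> (nat \<Rightarrow> nat \<Rightarrow> real)
    \<Rightarrow> nat \<Rightarrow> nat \<Rightarrow> 'y \<Rightarrow> real" where
  "jointUVY n W puv q u v y = puv u v * (\<Sum>x<n. q v x * W x y)"

definition IVY_U :: "nat \<Rightarrow> (nat \<Rightarrow> 'y::finite \<Rightarrow> real) \<Rightarrow> nat \<Rightarrow> nat \<Rightarrow> (nat \<Rightarrow> nat \<Rightarrow> real)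
    \<Rightarrow> (nat \<Rightarrow> nat \<Rightarrow> real) \<Rightarrow> real" where
  "IVY_U n W a b puv q = cmi {0..<a} {0..<b} UNIV (jointUVY n W puv q)"

definition is_dist2 :: "nat \<Rightarrow> nat \<Rightarrow> (nat \<Rightarrow> nat \<Rightarrow> real) \<Rightarrow> bool" where
  "is_dist2 a b puv \<longleftrightarrow> (\<forall>u<a. \<forall>v<b. 0 \<le> puv u v) \<and> (\<Sum>u<a. \<Sum>v<b. puv u v) = 1"

definition rate_split_values ::
  "nat \<Rightarrow> (nat \<Rightarrow> 'y::finite \<Rightarrow> real) \<Rightarrow> (nat \<Rightarrow> 'z::finite \<Rightarrow> real) \<Rightarrow> real \<Rightarrow> real set" where
  "rate_split_values n W Q \<mu> =
     {\<mu> * IVY n W b (\<lambda>v. \<Sum>u<a. puv u v) q + IVY_U n W a b puv q - IVY_U n Q a b puv q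
       | a b puv q. is_dist2 a b puv \<and> kernel b n q}"

definition prefix_values ::
  "nat \<Rightarrow> (nat \<Rightarrow> 'y::finite \<Rightarrow> real) \<Rightarrow> (nat \<Rightarrow> 'z::finite \<Rightarrow> real) \<Rightarrow> real \<Rightarrow> real set" where
  "prefix_values n W Q \<mu> =
     {(\<mu> + 1) * IVY n W b p q - IVY n Q b p q
       | b p q. b \<le> n \<and> is_dist {0..<b} p \<and> kernel b n q}"

definition secrecy_capacity ::
  "nat \<Rightarrow> (nat \<Rightarrow> 'y::finite \<Rightarrow> real) \<Rightarrow> (nat \<Rightarrow> 'z::finite \<Rightarrow> real) \<Rightarrow> real" where
  "secrecy_capacity n W Q =
     Sup {IVY n W b p q - IVY n Q b p q | b p q. is_dist {0..<b} p \<and> kernel b n q}"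

end

theory Submission
  imports Defs "HOL-Analysis.Analysis" "HOL-Real_Asymp.Real_Asymp"
begin

text \<open>
  Write I(V;Y|U) - I(V;Z|U) as the sum over the values of U of f evaluated at the unnormalised
  input laws P(U = u, X = -), and I(V;Y) as I(X;Y) - I(X;Y|V). Since f is homogeneous and
  dominated by its value at the uniform law, each f-term is at most its mass times that value;
  concavity and cyclic symmetry bound I(X;Y) by its value at the uniform law; and the conditional
  terms contribute an average of (mu+1) I(X;Y) - I(X;Z), which is at least its minimum over input
  laws. All three bounds are attained by V uniform on n values with X the V-th cyclic shift of a
  minimiser, which makes X uniform. The case mu = 0 gives the secrecy capacity.
\<close>

definition xlogx :: "real \<Rightarrow> real" where
  "xlogx t = t * log 2 t"

definition neg_entropy :: "('b::finite \<Rightarrow> real) \<Rightarrow> real" where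
  "neg_entropy R = (\<Sum>b\<in>UNIV. xlogx (R b))"

definition channel_output :: "nat \<Rightarrow> (nat \<Rightarrow> 'y::finite \<Rightarrow> real) \<Rightarrow> (nat \<Rightarrow> real) \<Rightarrow> 'y \<Rightarrow> real" where
  "channel_output n W P y = (\<Sum>x<n. P x * W x y)"

definition mixture :: "nat \<Rightarrow> (nat \<Rightarrow> real) \<Rightarrow> (nat \<Rightarrow> nat \<Rightarrow> real) \<Rightarrow> nat \<Rightarrow> real" where
  "mixture b p q x = (\<Sum>v<b. p v * q v x)"

definition shift_kernel :: "nat \<Rightarrow> (nat \<Rightarrow> real) \<Rightarrow> nat \<Rightarrow> nat \<Rightarrow> real" where
  "shift_kernel n P v x = P ((x + v) mod n)"

text \<open>Input laws extended by zero outside \<open>{0..<n}\<close>, so that they form a compact set.\<close>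

definition prob_simplex :: "nat \<Rightarrow> (nat \<Rightarrow> real) set" where
  "prob_simplex n = {P. (\<forall>x. P x \<in> (if x < n then {0..1} else {0})) \<and> (\<Sum>x<n. P x) = 1}"

section \<open>The function \<open>t log t\<close>\<close>

lemma xlogx_0 [simp]: "xlogx 0 = 0" and xlogx_1 [simp]: "xlogx 1 = 0"
  by (simp_all add: xlogx_def)

lemma xlogx_mult:
  assumes "0 \<le> a" "0 \<le> b"
  shows "xlogx (a * b) = a * xlogx b + b * xlogx a"
  using assms by (cases "a = 0 \<or> b = 0") (auto simp: xlogx_def log_mult algebra_simps)

lemma xlogx_ge_tangent:
  assumes a: "0 \<le> a" and t: "0 < t"
  shows "a * log 2 t + (a - t) / ln 2 \<le> xlogx a"
proof (cases "a = 0")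
  case True
  then show ?thesis using t by simp
next
  case False
  with a have a0: "0 < a" by simp
  have "1 - t / a \<le> ln (a / t)"
    using ln_le_minus_one[of "t / a"] a0 t by (simp add: ln_div)
  then have "a - t \<le> a * (ln a - ln t)"
    using mult_left_mono[OF _ a] a0 t by (fastforce simp: ln_div right_diff_distrib)
  then have "(a - t) / ln 2 \<le> a * (ln a - ln t) / ln 2"
    by (simp add: divide_right_mono)
  then show ?thesis
    by (simp add: xlogx_def log_def diff_divide_distrib right_diff_distrib)
qed

lemma xlogx_convex_sum:
  assumes K: "finite K" and l: "\<And>k. k \<in> K \<Longrightarrow> 0 \<le> l k" and a: "\<And>k. k \<in> K \<Longrightarrow> 0 \<le> a k"
    and l1: "sum l K = 1"
  shows "xlogx (\<Sum>k\<in>K. l k * a k) \<le> (\<Sum>k\<in>K. l k * xlogx (a k))"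
proof -
  define t where "t = (\<Sum>k\<in>K. l k * a k)"
  have "0 \<le> t"
    unfolding t_def by (intro sum_nonneg mult_nonneg_nonneg l a)
  show ?thesis
  proof (cases "t = 0")
    case True
    have "\<forall>k\<in>K. l k * a k = 0"
      using True sum_nonneg_eq_0_iff[OF K, of "\<lambda>k. l k * a k"] l a
      unfolding t_def by (simp add: mult_nonneg_nonneg)
    then have "(\<Sum>k\<in>K. l k * xlogx (a k)) = 0"
      by (intro sum.neutral) (auto simp: xlogx_def)
    with True show ?thesis by (simp add: t_def[symmetric])
  next
    case False
    with \<open>0 \<le> t\<close> have "0 < t" by simp
    \<comment> \<open>average the tangent lines of \<open>xlogx\<close> at \<open>t\<close>\<close>
    have "xlogx t = t * (log 2 t + 1 / ln 2) - (\<Sum>k\<in>K. l k) * (t / ln 2)"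
      using l1 by (simp add: xlogx_def algebra_simps)
    also have "\<dots> = (\<Sum>k\<in>K. l k * a k * (log 2 t + 1 / ln 2) - l k * (t / ln 2))"
      by (simp only: t_def sum_subtractf sum_distrib_right)
    also have "\<dots> = (\<Sum>k\<in>K. l k * (a k * log 2 t + (a k - t) / ln 2))"
      by (intro sum.cong refl) (simp add: algebra_simps diff_divide_distrib)
    also have "\<dots> \<le> (\<Sum>k\<in>K. l k * xlogx (a k))"
      by (intro sum_mono mult_left_mono xlogx_ge_tangent a \<open>0 < t\<close> l)
    finally show ?thesis by (simp only: t_def)
  qed
qed

lemma continuous_on_xlogx: "continuous_on {0..1} xlogx"
proof (rule continuous_on_IccI)
  have cont: "isCont xlogx x" if "0 < x" for x
    unfolding xlogx_def using that by (auto intro!: continuous_intros)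
  show "(xlogx \<longlongrightarrow> xlogx 0) (at_right 0)"
    unfolding xlogx_def by simp real_asymp
  show "(xlogx \<longlongrightarrow> xlogx 1) (at_left 1)"
    using cont[of 1] by (simp add: isCont_def tendsto_mono[OF at_within_le_at])
  show "xlogx \<midarrow>x\<rightarrow> xlogx x" if "0 < x" "x < 1" for x
    using cont[of x] that by (simp add: isCont_def)
qed simp

section \<open>Mutual information of mixtures\<close>

lemma mi_mixture:
  fixes K :: "'a \<Rightarrow> 'b::finite \<Rightarrow> real"
  assumes A: "finite A" and p: "\<And>a. a \<in> A \<Longrightarrow> 0 \<le> p a"
    and K: "\<And>a b. a \<in> A \<Longrightarrow> 0 \<le> K a b" and K1: "\<And>a. a \<in> A \<Longrightarrow> (\<Sum>b\<in>UNIV. K a b) = 1"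
  shows "mi A UNIV (\<lambda>a b. p a * K a b)
       = (\<Sum>a\<in>A. p a * neg_entropy (K a)) - neg_entropy (\<lambda>b. \<Sum>a\<in>A. p a * K a b)"
proof -
  define M where "M b = (\<Sum>a\<in>A. p a * K a b)" for b
  have "(if p a * K a b = 0 then 0 else
          p a * K a b * log 2 (p a * K a b / ((\<Sum>b'\<in>UNIV. p a * K a b') * M b)))
      = p a * xlogx (K a b) - p a * K a b * log 2 (M b)" if a: "a \<in> A" for a b
  proof (cases "p a * K a b = 0")
    case True
    then show ?thesis by (auto simp: xlogx_def)
  next
    case False
    with p[OF a] K[OF a] have pos: "0 < p a" "0 < K a b"
      by (auto simp: less_le)
    have "p a * K a b \<le> M b"
      unfolding M_def by (rule member_le_sum) (use A a p K in \<open>auto intro: mult_nonneg_nonneg\<close>)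
    with pos have "0 < M b" by (smt (verit) mult_pos_pos)
    with pos show ?thesis
      by (simp add: sum_distrib_left[symmetric] K1[OF a] log_divide xlogx_def algebra_simps)
  qed
  then have "mi A UNIV (\<lambda>a b. p a * K a b)
      = (\<Sum>a\<in>A. \<Sum>b\<in>UNIV. p a * xlogx (K a b) - p a * K a b * log 2 (M b))"
    unfolding mi_def M_def by (intro sum.cong refl) simp
  also have "\<dots> = (\<Sum>a\<in>A. p a * neg_entropy (K a)) - (\<Sum>b\<in>UNIV. M b * log 2 (M b))"
    by (simp add: sum_subtractf neg_entropy_def sum_distrib_left M_def sum_distrib_right
        sum.swap[of _ A])
  finally show ?thesis
    by (simp add: neg_entropy_def xlogx_def M_def)
qed

lemma mi_mixture_nonneg:
  fixes K :: "'a \<Rightarrow> 'b::finite \<Rightarrow> real"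
  assumes A: "finite A" and p: "\<And>a. a \<in> A \<Longrightarrow> 0 \<le> p a" and p1: "sum p A = 1"
    and K: "\<And>a b. a \<in> A \<Longrightarrow> 0 \<le> K a b" and K1: "\<And>a. a \<in> A \<Longrightarrow> (\<Sum>b\<in>UNIV. K a b) = 1"
  shows "0 \<le> mi A UNIV (\<lambda>a b. p a * K a b)"
proof -
  have "neg_entropy (\<lambda>b. \<Sum>a\<in>A. p a * K a b) \<le> (\<Sum>b\<in>UNIV. \<Sum>a\<in>A. p a * xlogx (K a b))"
    unfolding neg_entropy_def by (intro sum_mono xlogx_convex_sum A p K p1)
  also have "\<dots> = (\<Sum>a\<in>A. p a * neg_entropy (K a))"
    by (simp add: neg_entropy_def sum_distrib_left sum.swap[of _ UNIV])
  finally show ?thesis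
    by (simp add: mi_mixture[OF A p K K1])
qed

lemma cmi_eq_sum_mi:
  assumes C: "finite C" and A: "finite A" and B: "finite B"
    and J: "\<And>c a b. c \<in> C \<Longrightarrow> a \<in> A \<Longrightarrow> b \<in> B \<Longrightarrow> 0 \<le> J c a b"
  shows "cmi C A B J = (\<Sum>c\<in>C. mi A B (J c) + xlogx (\<Sum>a\<in>A. \<Sum>b\<in>B. J c a b))"
proof -
  define T where "T c = (\<Sum>a\<in>A. \<Sum>b\<in>B. J c a b)" for c
  define D where "D c a b = (\<Sum>b'\<in>B. J c a b') * (\<Sum>a'\<in>A. J c a' b)" for c a b
  have "(if J c a b = 0 then 0 else J c a b * log 2 (J c a b * T c / D c a b))
      = (if J c a b = 0 then 0 else J c a b * log 2 (J c a b / D c a b)) + J c a b * log 2 (T c)"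
    if abc: "c \<in> C" "a \<in> A" "b \<in> B" for c a b
  proof (cases "J c a b = 0")
    case False
    with J[OF abc] have pos: "0 < J c a b" by simp
    have "J c a b \<le> (\<Sum>b'\<in>B. J c a b')"
      by (rule member_le_sum) (use B abc J in auto)
    moreover have "J c a b \<le> (\<Sum>a'\<in>A. J c a' b)"
      by (rule member_le_sum[of a A "\<lambda>a'. J c a' b"]) (use A abc J in auto)
    moreover have "(\<Sum>b'\<in>B. J c a b') \<le> T c"
      unfolding T_def by (rule member_le_sum[of a A "\<lambda>a'. \<Sum>b'\<in>B. J c a' b'"])
        (use A B abc J in \<open>auto intro: sum_nonneg\<close>)
    ultimately have "0 < D c a b" "0 < T c"
      using pos unfolding D_def by auto
    with pos have "log 2 (J c a b * T c / D c a b) = log 2 (J c a b / D c a b) + log 2 (T c)"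
      using log_mult[of 2 "J c a b / D c a b" "T c"] by (simp add: mult.commute)
    with False show ?thesis by (simp add: distrib_left)
  qed simp
  then have "cmi C A B J = (\<Sum>c\<in>C. \<Sum>a\<in>A. \<Sum>b\<in>B.
      (if J c a b = 0 then 0 else J c a b * log 2 (J c a b / D c a b)) + J c a b * log 2 (T c))"
    unfolding cmi_def T_def D_def by (intro sum.cong refl) simp
  also have "\<dots> = (\<Sum>c\<in>C. mi A B (J c) + xlogx (T c))"
    unfolding D_def by (simp add: sum.distrib mi_def xlogx_def T_def sum_distrib_right)
  finally show ?thesis by (simp add: T_def)
qed

section \<open>Mutual information through a channel\<close>

lemma channel_nonneg: "channel n W \<Longrightarrow> x < n \<Longrightarrow> 0 \<le> W x y"
  by (auto simp: channel_def is_dist_def)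

lemma channel_sum: "channel n W \<Longrightarrow> x < n \<Longrightarrow> (\<Sum>y\<in>UNIV. W x y) = 1"
  by (auto simp: channel_def is_dist_def)

lemma kernel_nonneg: "kernel b n q \<Longrightarrow> v < b \<Longrightarrow> x < n \<Longrightarrow> 0 \<le> q v x"
  by (auto simp: kernel_def is_dist_def)

lemma kernel_sum: "kernel b n q \<Longrightarrow> v < b \<Longrightarrow> (\<Sum>x<n. q v x) = 1"
  by (auto simp: kernel_def is_dist_def atLeast0LessThan)

lemma channel_output_nonneg:
  "channel n W \<Longrightarrow> (\<And>x. x < n \<Longrightarrow> 0 \<le> P x) \<Longrightarrow> 0 \<le> channel_output n W P y"
  unfolding channel_output_def by (intro sum_nonneg mult_nonneg_nonneg) (auto simp: channel_nonneg)

lemma channel_output_sum: "channel n W \<Longrightarrow> (\<Sum>y\<in>UNIV. channel_output n W P y) = (\<Sum>x<n. P x)"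
  unfolding channel_output_def
  by (subst sum.swap) (simp add: sum_distrib_left[symmetric] channel_sum)

lemma channel_output_scale: "channel_output n W (\<lambda>x. c * P x) y = c * channel_output n W P y"
  by (simp add: channel_output_def sum_distrib_left mult.assoc)

lemma channel_output_mixture:
  "channel_output n W (mixture b p q) y = (\<Sum>v<b. p v * channel_output n W (q v) y)"
  unfolding channel_output_def mixture_def
  by (simp add: sum_distrib_left sum_distrib_right mult.assoc sum.swap[of _ "{..<b}"])

lemma channel_output_le_1:
  assumes W: "channel n W" and P: "\<And>x. x < n \<Longrightarrow> 0 \<le> P x" and P1: "(\<Sum>x<n. P x) = 1"
  shows "channel_output n W P y \<le> 1"
proof -
  have "channel_output n W P y \<le> (\<Sum>y\<in>UNIV. channel_output n W P y)"
    by (rule member_le_sum) (auto intro: channel_output_nonneg[OF W P])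
  with P1 show ?thesis by (simp add: channel_output_sum[OF W])
qed

lemma Iin_eq:
  assumes W: "channel n W" and P: "\<And>x. x < n \<Longrightarrow> 0 \<le> P x"
  shows "Iin n W P = (\<Sum>x<n. P x * neg_entropy (W x)) - neg_entropy (channel_output n W P)"
  unfolding Iin_def channel_output_def atLeast0LessThan
  by (rule mi_mixture) (auto intro: P channel_nonneg[OF W] channel_sum[OF W])

lemma Iin_cong: "(\<And>x. x < n \<Longrightarrow> P x = P' x) \<Longrightarrow> Iin n W P = Iin n W P'"
  unfolding Iin_def mi_def by (intro sum.cong refl) auto

lemma neg_entropy_scale:
  assumes "0 \<le> c" and "\<And>y. 0 \<le> R y"
  shows "neg_entropy (\<lambda>y. c * R y) = c * neg_entropy R + (\<Sum>y\<in>UNIV. R y) * xlogx c"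
  unfolding neg_entropy_def using assms
  by (simp add: xlogx_mult sum.distrib sum_distrib_left sum_distrib_right)

lemma Iin_scale:
  assumes W: "channel n W" and P: "\<And>x. x < n \<Longrightarrow> 0 \<le> P x" and c: "0 \<le> c"
  shows "Iin n W (\<lambda>x. c * P x) = c * Iin n W P - (\<Sum>x<n. P x) * xlogx c"
proof -
  have "Iin n W (\<lambda>x. c * P x)
      = (\<Sum>x<n. c * P x * neg_entropy (W x)) - neg_entropy (\<lambda>y. c * channel_output n W P y)"
    unfolding channel_output_scale[symmetric] by (rule Iin_eq[OF W]) (simp add: P c)
  also have "\<dots> = c * Iin n W P - (\<Sum>x<n. P x) * xlogx c"
    by (simp add: Iin_eq[OF W P] neg_entropy_scale[OF c] channel_output_nonneg[OF W P]
        channel_output_sum[OF W] sum_distrib_left mult.assoc right_diff_distrib)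
  finally show ?thesis .
qed

lemma fsec_scale:
  assumes "channel n W" "channel n Q" "\<And>x. x < n \<Longrightarrow> 0 \<le> P x" "0 \<le> c"
  shows "fsec n W Q (\<lambda>x. c * P x) = c * fsec n W Q P"
  using assms by (simp add: fsec_def Iin_scale right_diff_distrib)

lemma mixture_nonneg:
  "(\<And>v. v < b \<Longrightarrow> 0 \<le> p v) \<Longrightarrow> kernel b n q \<Longrightarrow> x < n \<Longrightarrow> 0 \<le> mixture b p q x"
  unfolding mixture_def by (intro sum_nonneg mult_nonneg_nonneg) (auto simp: kernel_nonneg)

lemma mixture_sum: "kernel b n q \<Longrightarrow> (\<Sum>x<n. mixture b p q x) = (\<Sum>v<b. p v)"
  unfolding mixture_def
  by (subst sum.swap) (simp add: sum_distrib_left[symmetric] kernel_sum)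

lemma mixture_is_dist:
  "is_dist {0..<b} p \<Longrightarrow> kernel b n q \<Longrightarrow> is_dist {0..<n} (mixture b p q)"
  by (auto simp: is_dist_def atLeast0LessThan mixture_sum intro: mixture_nonneg)

lemma IVY_channel_output:
  "IVY n W b p q = mi {..<b} UNIV (\<lambda>v y. p v * channel_output n W (q v) y)"
  by (simp add: IVY_def jointVY_def[abs_def] channel_output_def atLeast0LessThan)

lemma kernel_channel_output:
  assumes W: "channel n W" and q: "kernel b n q" and v: "v < b"
  shows "0 \<le> channel_output n W (q v) y" and "(\<Sum>y\<in>UNIV. channel_output n W (q v) y) = 1"
  using channel_output_nonneg[OF W kernel_nonneg[OF q v]] channel_output_sum[OF W] kernel_sum[OF q v]
  by auto

text \<open>The chain rule \<open>I(V;Y) = I(X;Y) - I(X;Y|V)\<close> for a channel prefix \<open>V \<rightarrow> X\<close>;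
  the weights \<open>p\<close> need not be normalised.\<close>

lemma IVY_eq:
  assumes W: "channel n W" and p: "\<And>v. v < b \<Longrightarrow> 0 \<le> p v" and q: "kernel b n q"
  shows "IVY n W b p q = Iin n W (mixture b p q) - (\<Sum>v<b. p v * Iin n W (q v))"
proof -
  have "IVY n W b p q = mi {..<b} UNIV (\<lambda>v y. p v * channel_output n W (q v) y)"
    by (rule IVY_channel_output)
  also have "\<dots> = (\<Sum>v<b. p v * neg_entropy (channel_output n W (q v)))
      - neg_entropy (channel_output n W (mixture b p q))"
    unfolding channel_output_mixture
    by (rule mi_mixture) (auto intro: p kernel_channel_output[OF W q])
  also have "(\<Sum>v<b. p v * neg_entropy (channel_output n W (q v)))
      = (\<Sum>v<b. p v * ((\<Sum>x<n. q v x * neg_entropy (W x)) - Iin n W (q v)))"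
    by (intro sum.cong refl) (simp add: Iin_eq[OF W] kernel_nonneg[OF q])
  also have "\<dots> = (\<Sum>x<n. mixture b p q x * neg_entropy (W x)) - (\<Sum>v<b. p v * Iin n W (q v))"
    by (simp add: mixture_def right_diff_distrib sum_subtractf sum_distrib_left sum_distrib_right
        mult.assoc sum.swap[of _ "{..<n}"])
  finally show ?thesis
    by (simp add: Iin_eq[OF W mixture_nonneg[OF p q]])
qed

lemma IVY_nonneg:
  assumes W: "channel n W" and p: "is_dist {0..<b} p" and q: "kernel b n q"
  shows "0 \<le> IVY n W b p q"
  unfolding IVY_channel_output using p
  by (intro mi_mixture_nonneg) (auto simp: is_dist_def atLeast0LessThan intro: kernel_channel_output[OF W q])

lemma IVY_U_eq:
  assumes W: "channel n W" and puv: "\<And>u v. u < a \<Longrightarrow> v < b \<Longrightarrow> 0 \<le> puv u v"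
    and q: "kernel b n q"
  shows "IVY_U n W a b puv q = (\<Sum>u<a. IVY n W b (puv u) q + xlogx (\<Sum>v<b. puv u v))"
proof -
  have "IVY_U n W a b puv q = (\<Sum>u<a. mi {0..<b} UNIV (jointUVY n W puv q u)
      + xlogx (\<Sum>v<b. \<Sum>y\<in>UNIV. jointUVY n W puv q u v y))"
    unfolding IVY_U_def
    by (subst cmi_eq_sum_mi)
      (auto simp: jointUVY_def atLeast0LessThan intro!: mult_nonneg_nonneg puv sum_nonneg
        kernel_nonneg[OF q] channel_nonneg[OF W])
  moreover have "(\<Sum>y\<in>UNIV. jointUVY n W puv q u v y) = puv u v" if "v < b" for u v
    using channel_output_sum[OF W, of "q v"] kernel_sum[OF q that]
    by (simp add: jointUVY_def channel_output_def sum_distrib_left[symmetric])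
  ultimately show ?thesis
    by (simp add: IVY_def jointVY_def[abs_def] jointUVY_def[abs_def])
qed

section \<open>Cyclic shift symmetry\<close>

lemma inj_on_mod_shift: "inj_on (\<lambda>k. (x + k) mod n) {..<(n::nat)}"
proof (rule inj_onI)
  have eq: "k = k'" if "k \<le> k'" "k' < n" "(x + k) mod n = (x + k') mod n" for k k'
  proof -
    have "n dvd k' - k"
      using that mod_eq_dvd_iff_nat[of "x + k" "x + k'" n] by simp
    moreover have "k' - k < n" using that by simp
    ultimately have "k' - k = 0" using dvd_imp_le by fastforce
    with \<open>k \<le> k'\<close> show ?thesis by simp
  qed
  fix k k' assume "k \<in> {..<n}" "k' \<in> {..<n}" "(x + k) mod n = (x + k') mod n"
  then show "k = k'" using eq[of k k'] eq[of k' k] by (cases "k \<le> k'") auto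
qed

lemma sum_mod_shift: "(\<Sum>k<n. f ((x + k) mod n)) = (\<Sum>k<(n::nat). f k)"
proof -
  have "(\<lambda>k. (x + k) mod n) ` {..<n} = {..<n}"
  proof (rule endo_inj_surj)
    show "(\<lambda>k. (x + k) mod n) ` {..<n} \<subseteq> {..<n}" by (cases "n = 0") auto
  qed (simp_all add: inj_on_mod_shift)
  then show ?thesis
    using sum.reindex[OF inj_on_mod_shift, of f x n] by (simp add: comp_def)
qed

lemma uniform_in_is_dist: "0 < n \<Longrightarrow> is_dist {0..<n} (uniform_in n)"
  by (simp add: is_dist_def uniform_in_def)

lemma kernel_shift_kernel:
  assumes n: "0 < n" and P: "is_dist {0..<n} P"
  shows "kernel n n (shift_kernel n P)"
  using P n unfolding kernel_def is_dist_def shift_kernel_def atLeast0LessThan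
  by (simp add: add.commute[of _ "_ :: nat"] sum_mod_shift)

lemma mixture_shift_kernel:
  assumes P: "is_dist {0..<n} P" and x: "x < n"
  shows "mixture n (uniform_in n) (shift_kernel n P) x = uniform_in n x"
  using P unfolding mixture_def shift_kernel_def uniform_in_def is_dist_def atLeast0LessThan
  by (simp add: sum_divide_distrib[symmetric] sum_mod_shift)

lemma Iin_shift_kernel:
  "cyclic_shift_symmetric n W \<Longrightarrow> is_dist {0..<n} P \<Longrightarrow> Iin n W (shift_kernel n P v) = Iin n W P"
  unfolding cyclic_shift_symmetric_def shift_kernel_def by blast

text \<open>With \<open>V\<close> uniform and \<open>X\<close> the \<open>V\<close>-th cyclic shift of \<open>P\<close>, the input \<open>X\<close> is uniform
  while every conditional input has the information of \<open>P\<close>.\<close>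

lemma IVY_shift_kernel:
  assumes W: "channel n W" and css: "cyclic_shift_symmetric n W"
    and n: "0 < n" and P: "is_dist {0..<n} P"
  shows "IVY n W n (uniform_in n) (shift_kernel n P) = Iin n W (uniform_in n) - Iin n W P"
proof -
  have "Iin n W (mixture n (uniform_in n) (shift_kernel n P)) = Iin n W (uniform_in n)"
    by (rule Iin_cong) (rule mixture_shift_kernel[OF P])
  then show ?thesis
    using n by (simp add: IVY_eq[OF W _ kernel_shift_kernel[OF n P]] Iin_shift_kernel[OF css P]
        uniform_in_def)
qed

lemma Iin_le_uniform:
  assumes W: "channel n W" and css: "cyclic_shift_symmetric n W"
    and n: "0 < n" and P: "is_dist {0..<n} P"
  shows "Iin n W P \<le> Iin n W (uniform_in n)"
  using IVY_nonneg[OF W uniform_in_is_dist[OF n] kernel_shift_kernel[OF n P]]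
  by (simp add: IVY_shift_kernel[OF assms])

lemma fsec_cong:
  assumes "\<And>x. x < n \<Longrightarrow> P x = P' x"
  shows "fsec n W Q P = fsec n W Q P'"
  unfolding fsec_def by (simp add: Iin_cong[of n P P'] assms)

lemma fsec_le_mass_uniform:
  assumes W: "channel n W" and Q: "channel n Q" and dcss: "dominantly_cyclic_shift_symmetric n W Q"
    and P: "\<And>x. x < n \<Longrightarrow> 0 \<le> P x"
  shows "fsec n W Q P \<le> (\<Sum>x<n. P x) * fsec n W Q (uniform_in n)"
proof -
  define s where "s = (\<Sum>x<n. P x)"
  have "0 \<le> s" unfolding s_def by (rule sum_nonneg) (simp add: P)
  show ?thesis
  proof (cases "s = 0")
    case True
    then have "P x = 0 * P x" if "x < n" for x
      using sum_nonneg_eq_0_iff[of "{..<n}" P] P that unfolding s_def by auto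
    then have "fsec n W Q P = fsec n W Q (\<lambda>x. 0 * P x)"
      by (rule fsec_cong)
    with True fsec_scale[OF W Q P order_refl] show ?thesis by (simp add: s_def)
  next
    case False
    with \<open>0 \<le> s\<close> have "0 < s" by simp
    have P_eq: "P = (\<lambda>x. s * (P x / s))" using \<open>0 < s\<close> by simp
    have "is_dist {0..<n} (\<lambda>x. P x / s)"
      using P \<open>0 < s\<close>
      by (simp add: is_dist_def atLeast0LessThan sum_divide_distrib[symmetric] s_def[symmetric])
    then have "fsec n W Q (\<lambda>x. P x / s) \<le> fsec n W Q (uniform_in n)"
      using dcss unfolding dominantly_cyclic_shift_symmetric_def by blast
    with \<open>0 < s\<close> have "s * fsec n W Q (\<lambda>x. P x / s) \<le> s * fsec n W Q (uniform_in n)"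
      by simp
    then show ?thesis
      using fsec_scale[OF W Q _ \<open>0 \<le> s\<close>, of "\<lambda>x. P x / s"] P \<open>0 < s\<close>
      by (simp add: P_eq[symmetric] s_def)
  qed
qed

section \<open>Existence of optimal input distributions\<close>

lemma compact_prob_simplex: "compact (prob_simplex n)"
proof -
  define F where "F x = (if x < n then {0..1} else {0::real})" for x
  have "compactin (product_topology (\<lambda>_. euclidean) UNIV) (PiE UNIV F)"
    by (subst compactin_PiE) (auto simp: F_def)
  then have "compact (Pi UNIV F)"
    by (simp add: euclidean_product_topology PiE_UNIV_domain)
  moreover have "closed {P::nat \<Rightarrow> real. (\<Sum>x<n. P x) = 1}"
    by (intro closed_Collect_eq continuous_intros continuous_on_product_coordinates)
  ultimately have "compact (Pi UNIV F \<inter> {P. (\<Sum>x<n. P x) = 1})"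
    by (rule compact_Int_closed)
  moreover have "prob_simplex n = Pi UNIV F \<inter> {P. (\<Sum>x<n. P x) = 1}"
    unfolding prob_simplex_def F_def Pi_iff by (auto split: if_splits)
  ultimately show ?thesis by simp
qed

lemma prob_simplex_is_dist:
  assumes P: "P \<in> prob_simplex n"
  shows "is_dist {0..<n} P"
proof -
  have "0 \<le> P x" if "x < n" for x
  proof -
    have "P x \<in> (if x < n then {0..1} else {0})"
      using P unfolding prob_simplex_def by blast
    with that show ?thesis by simp
  qed
  with P show ?thesis by (simp add: prob_simplex_def is_dist_def atLeast0LessThan)
qed

lemma is_dist_restrict_in_prob_simplex:
  assumes "is_dist {0..<n} P"
  shows "(\<lambda>x. if x < n then P x else 0) \<in> prob_simplex n"
proof -
  have "P x \<le> 1" if "x < n" for x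
    using assms member_le_sum[of x "{0..<n}" P] that by (simp add: is_dist_def)
  with assms show ?thesis
    by (simp add: prob_simplex_def is_dist_def atLeast0LessThan)
qed

lemma continuous_on_Iin:
  assumes W: "channel n W"
  shows "continuous_on (prob_simplex n) (Iin n W)"
proof -
  have nonneg: "0 \<le> P x" if "P \<in> prob_simplex n" "x < n" for P x
    using prob_simplex_is_dist[OF that(1)] that(2) by (simp add: is_dist_def)
  have out: "channel_output n W P y \<in> {0..1}" if "P \<in> prob_simplex n" for P y
    using channel_output_nonneg[OF W nonneg[OF that]] channel_output_le_1[OF W nonneg[OF that]] that
    by (simp add: prob_simplex_def)
  have "continuous_on (prob_simplex n) (\<lambda>P. channel_output n W P y)" for y
    unfolding channel_output_def
    by (intro continuous_intros continuous_on_subset[OF continuous_on_product_coordinates]) auto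
  then have "continuous_on (prob_simplex n) (\<lambda>P. xlogx (channel_output n W P y))" for y
    by (rule continuous_on_compose2[OF continuous_on_xlogx]) (auto intro: out)
  then have "continuous_on (prob_simplex n)
      (\<lambda>P. (\<Sum>x<n. P x * neg_entropy (W x)) - neg_entropy (channel_output n W P))"
    unfolding neg_entropy_def
    by (intro continuous_intros continuous_on_subset[OF continuous_on_product_coordinates]) auto
  then show ?thesis
    by (rule continuous_on_cong[THEN iffD1, rotated 2]) (simp_all add: Iin_eq[OF W] nonneg)
qed

lemma exists_minimizer_on_dists:
  fixes h :: "(nat \<Rightarrow> real) \<Rightarrow> real"
  assumes n: "0 < n" and h: "continuous_on (prob_simplex n) h"
    and cong: "\<And>P P'. (\<And>x. x < n \<Longrightarrow> P x = P' x) \<Longrightarrow> h P = h P'"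
  shows "\<exists>P0. is_dist {0..<n} P0 \<and> (\<forall>P. is_dist {0..<n} P \<longrightarrow> h P0 \<le> h P)"
proof -
  have ne: "prob_simplex n \<noteq> {}"
    using is_dist_restrict_in_prob_simplex[OF uniform_in_is_dist[OF n]] by blast
  obtain P0 where P0: "P0 \<in> prob_simplex n" and min: "\<forall>P\<in>prob_simplex n. h P0 \<le> h P"
    using continuous_attains_inf[OF compact_prob_simplex ne h] by blast
  have "h P0 \<le> h P" if "is_dist {0..<n} P" for P
  proof -
    have "h P0 \<le> h (\<lambda>x. if x < n then P x else 0)"
      using min is_dist_restrict_in_prob_simplex[OF that] by blast
    also have "\<dots> = h P" by (rule cong) simp
    finally show ?thesis .
  qed
  with P0 prob_simplex_is_dist show ?thesis by blast
qed

lemma exists_minimizer_Iin_combination: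
  assumes n: "0 < n" and W: "channel n W" and Q: "channel n Q"
  shows "\<exists>P0. is_dist {0..<n} P0 \<and> (\<forall>P. is_dist {0..<n} P \<longrightarrow>
    c * Iin n W P0 - Iin n Q P0 \<le> c * Iin n W P - Iin n Q P)"
proof (rule exists_minimizer_on_dists[OF n])
  show "continuous_on (prob_simplex n) (\<lambda>P. c * Iin n W P - Iin n Q P)"
    by (intro continuous_intros continuous_on_Iin W Q)
  show "c * Iin n W P - Iin n Q P = c * Iin n W P' - Iin n Q P'"
    if "\<And>x. x < n \<Longrightarrow> P x = P' x" for P P'
    by (simp add: Iin_cong[of n P P'] that)
qed

section \<open>Optimality of channel prefixes\<close>

lemma rate_split_value_eq:
  assumes W: "channel n W" and Q: "channel n Q" and puv: "is_dist2 a b puv" and q: "kernel b n q"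
  shows "\<mu> * IVY n W b (\<lambda>v. \<Sum>u<a. puv u v) q + IVY_U n W a b puv q - IVY_U n Q a b puv q
     = \<mu> * Iin n W (mixture b (\<lambda>v. \<Sum>u<a. puv u v) q) + (\<Sum>u<a. fsec n W Q (mixture b (puv u) q))
       - (\<Sum>v<b. (\<Sum>u<a. puv u v) * ((\<mu> + 1) * Iin n W (q v) - Iin n Q (q v)))"
proof -
  define pv where "pv v = (\<Sum>u<a. puv u v)" for v
  have nn: "\<And>u v. u < a \<Longrightarrow> v < b \<Longrightarrow> 0 \<le> puv u v"
    using puv by (simp add: is_dist2_def)
  have "IVY_U n W a b puv q - IVY_U n Q a b puv q
      = (\<Sum>u<a. IVY n W b (puv u) q - IVY n Q b (puv u) q)"
    by (simp add: IVY_U_eq[OF W nn q] IVY_U_eq[OF Q nn q] sum.distrib sum_subtractf)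
  also have "\<dots> = (\<Sum>u<a. fsec n W Q (mixture b (puv u) q) - (\<Sum>v<b. puv u v * fsec n W Q (q v)))"
    by (intro sum.cong refl)
      (simp add: IVY_eq[OF W _ q] IVY_eq[OF Q _ q] nn fsec_def sum_subtractf right_diff_distrib)
  also have "\<dots> = (\<Sum>u<a. fsec n W Q (mixture b (puv u) q)) - (\<Sum>v<b. pv v * fsec n W Q (q v))"
    by (simp add: sum_subtractf pv_def sum_distrib_right sum.swap[of _ "{..<a}"])
  moreover have "IVY n W b pv q = Iin n W (mixture b pv q) - (\<Sum>v<b. pv v * Iin n W (q v))"
    by (rule IVY_eq[OF W _ q]) (auto simp: pv_def intro!: sum_nonneg nn)
  then have "\<mu> * IVY n W b pv q = \<mu> * Iin n W (mixture b pv q) - \<mu> * (\<Sum>v<b. pv v * Iin n W (q v))"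
    by (simp add: right_diff_distrib)
  moreover have "(\<Sum>v<b. pv v * ((\<mu> + 1) * Iin n W (q v) - Iin n Q (q v)))
      = \<mu> * (\<Sum>v<b. pv v * Iin n W (q v)) + (\<Sum>v<b. pv v * fsec n W Q (q v))"
    by (simp add: fsec_def sum_distrib_left sum.distrib[symmetric] algebra_simps)
  ultimately show ?thesis
    unfolding pv_def[symmetric] by linarith
qed

lemma rate_split_values_le:
  assumes W: "channel n W" and Q: "channel n Q" and dcss: "dominantly_cyclic_shift_symmetric n W Q"
    and n: "0 < n" and \<mu>: "0 \<le> \<mu>"
    and g: "\<And>P. is_dist {0..<n} P \<Longrightarrow> g \<le> (\<mu> + 1) * Iin n W P - Iin n Q P"
    and t: "t \<in> rate_split_values n W Q \<mu>"
  shows "t \<le> \<mu> * Iin n W (uniform_in n) + fsec n W Q (uniform_in n) - g"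
proof -
  obtain a b puv q where t_eq: "t = \<mu> * IVY n W b (\<lambda>v. \<Sum>u<a. puv u v) q + IVY_U n W a b puv q - IVY_U n Q a b puv q"
    and puv: "is_dist2 a b puv" and q: "kernel b n q"
    using t unfolding rate_split_values_def by blast
  define pv where "pv v = (\<Sum>u<a. puv u v)" for v
  have nn: "\<And>u v. u < a \<Longrightarrow> v < b \<Longrightarrow> 0 \<le> puv u v" and puv1: "(\<Sum>u<a. \<Sum>v<b. puv u v) = 1"
    using puv by (simp_all add: is_dist2_def)
  have pv: "is_dist {0..<b} pv"
    using puv1 by (auto simp: is_dist_def atLeast0LessThan pv_def sum.swap[of _ "{..<b}"]
        intro!: sum_nonneg nn)
  have cssW: "cyclic_shift_symmetric n W"
    using dcss by (simp add: dominantly_cyclic_shift_symmetric_def)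
  have "\<mu> * Iin n W (mixture b pv q) \<le> \<mu> * Iin n W (uniform_in n)"
    using Iin_le_uniform[OF W cssW n mixture_is_dist[OF pv q]] \<mu> by (rule mult_left_mono)
  moreover have "(\<Sum>u<a. fsec n W Q (mixture b (puv u) q)) \<le> fsec n W Q (uniform_in n)"
  proof -
    have "(\<Sum>u<a. fsec n W Q (mixture b (puv u) q))
        \<le> (\<Sum>u<a. (\<Sum>x<n. mixture b (puv u) q x) * fsec n W Q (uniform_in n))"
      by (intro sum_mono fsec_le_mass_uniform[OF W Q dcss] mixture_nonneg[OF _ q]) (simp add: nn)
    also have "\<dots> = fsec n W Q (uniform_in n)"
      by (simp add: mixture_sum[OF q] sum_distrib_right[symmetric] puv1)
    finally show ?thesis .
  qed
  moreover have "g \<le> (\<Sum>v<b. pv v * ((\<mu> + 1) * Iin n W (q v) - Iin n Q (q v)))"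
  proof -
    have "g = (\<Sum>v<b. pv v * g)"
      using pv by (simp add: is_dist_def atLeast0LessThan sum_distrib_right[symmetric])
    also have "\<dots> \<le> (\<Sum>v<b. pv v * ((\<mu> + 1) * Iin n W (q v) - Iin n Q (q v)))"
      using pv q by (intro sum_mono mult_left_mono g) (auto simp: kernel_def is_dist_def)
    finally show ?thesis .
  qed
  ultimately show ?thesis
    using rate_split_value_eq[OF W Q puv q, of \<mu>] unfolding t_eq pv_def by linarith
qed

lemma prefix_value_in_rate_split_values:
  assumes W: "channel n W" and Q: "channel n Q" and p: "is_dist {0..<b} p" and q: "kernel b n q"
  shows "(\<mu> + 1) * IVY n W b p q - IVY n Q b p q \<in> rate_split_values n W Q \<mu>"
proof -
  have p0: "\<And>v. v < b \<Longrightarrow> 0 \<le> p v" and p1: "(\<Sum>v<b. p v) = 1"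
    using p by (simp_all add: is_dist_def atLeast0LessThan)
  have puv: "is_dist2 1 b (\<lambda>u. p)"
    using p by (simp add: is_dist2_def is_dist_def atLeast0LessThan)
  have value_eq: "(\<mu> + 1) * IVY n W b p q - IVY n Q b p q
      = \<mu> * IVY n W b (\<lambda>v. \<Sum>u<(1::nat). p v) q + IVY_U n W 1 b (\<lambda>u. p) q - IVY_U n Q 1 b (\<lambda>u. p) q"
  proof -
    have "IVY_U n W 1 b (\<lambda>u. p) q = IVY n W b p q" "IVY_U n Q 1 b (\<lambda>u. p) q = IVY n Q b p q"
      by (subst IVY_U_eq[OF W _ q] IVY_U_eq[OF Q _ q], simp_all add: p0 p1)+
    then show ?thesis by (simp add: algebra_simps)
  qed
  show ?thesis
    unfolding rate_split_values_def mem_Collect_eq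
    by (intro exI[of _ 1] exI[of _ b] exI[of _ "\<lambda>u. p"] exI[of _ q] conjI value_eq puv q)
qed

lemma symmetric_prefix_value_in_prefix_values:
  assumes W: "channel n W" and Q: "channel n Q"
    and cssW: "cyclic_shift_symmetric n W" and cssQ: "cyclic_shift_symmetric n Q"
    and n: "0 < n" and P: "is_dist {0..<n} P"
  shows "\<mu> * Iin n W (uniform_in n) + fsec n W Q (uniform_in n) - ((\<mu> + 1) * Iin n W P - Iin n Q P)
    \<in> prefix_values n W Q \<mu>"
proof -
  have "\<mu> * Iin n W (uniform_in n) + fsec n W Q (uniform_in n) - ((\<mu> + 1) * Iin n W P - Iin n Q P)
      = (\<mu> + 1) * IVY n W n (uniform_in n) (shift_kernel n P) - IVY n Q n (uniform_in n) (shift_kernel n P)"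
    by (simp add: IVY_shift_kernel[OF W cssW n P] IVY_shift_kernel[OF Q cssQ n P] fsec_def
        algebra_simps)
  then show ?thesis
    unfolding prefix_values_def using uniform_in_is_dist[OF n] kernel_shift_kernel[OF n P] by blast
qed

lemma rate_split_values_max:
  assumes W: "channel n W" and Q: "channel n Q" and dcss: "dominantly_cyclic_shift_symmetric n W Q"
    and n: "0 < n" and \<mu>: "0 \<le> \<mu>" and P0: "is_dist {0..<n} P0"
    and min: "\<And>P. is_dist {0..<n} P \<Longrightarrow>
      (\<mu> + 1) * Iin n W P0 - Iin n Q P0 \<le> (\<mu> + 1) * Iin n W P - Iin n Q P"
  defines "m \<equiv> \<mu> * Iin n W (uniform_in n) + fsec n W Q (uniform_in n) - ((\<mu> + 1) * Iin n W P0 - Iin n Q P0)"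
  shows "m \<in> prefix_values n W Q \<mu>" and "\<forall>t \<in> prefix_values n W Q \<mu>. t \<le> m"
    and "bdd_above (rate_split_values n W Q \<mu>)" and "Sup (rate_split_values n W Q \<mu>) = m"
proof -
  have css: "cyclic_shift_symmetric n W" "cyclic_shift_symmetric n Q"
    using dcss by (simp_all add: dominantly_cyclic_shift_symmetric_def)
  show m: "m \<in> prefix_values n W Q \<mu>"
    unfolding m_def by (rule symmetric_prefix_value_in_prefix_values[OF W Q css n P0])
  have le: "\<forall>t \<in> rate_split_values n W Q \<mu>. t \<le> m"
    unfolding m_def using rate_split_values_le[OF W Q dcss n \<mu> min] by blast
  have sub: "prefix_values n W Q \<mu> \<subseteq> rate_split_values n W Q \<mu>"
    unfolding prefix_values_def using prefix_value_in_rate_split_values[OF W Q] by blast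
  show "\<forall>t \<in> prefix_values n W Q \<mu>. t \<le> m" "bdd_above (rate_split_values n W Q \<mu>)"
    using le sub by (auto intro: bdd_aboveI)
  show "Sup (rate_split_values n W Q \<mu>) = m"
    using m sub le by (intro cSup_eq_maximum) auto
qed

lemma secrecy_capacity_eq:
  assumes W: "channel n W" and Q: "channel n Q" and dcss: "dominantly_cyclic_shift_symmetric n W Q"
    and n: "0 < n" and P0: "is_dist {0..<n} P0"
    and min: "\<And>P. is_dist {0..<n} P \<Longrightarrow> fsec n W Q P0 \<le> fsec n W Q P"
  shows "secrecy_capacity n W Q = fsec n W Q (uniform_in n) - fsec n W Q P0"
proof -
  have "(0 + 1) * Iin n W P0 - Iin n Q P0 \<le> (0 + 1) * Iin n W P - Iin n Q P" if "is_dist {0..<n} P" for P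
    using min[OF that] by (simp add: fsec_def)
  note max0 = rate_split_values_max[OF W Q dcss n order_refl P0 this]
  define S where "S = {IVY n W b p q - IVY n Q b p q | b p q. is_dist {0..<b} p \<and> kernel b n q}"
  have "S \<subseteq> rate_split_values n W Q 0"
    unfolding S_def using prefix_value_in_rate_split_values[OF W Q, of _ _ _ 0] by force
  then have "t \<le> fsec n W Q (uniform_in n) - fsec n W Q P0" if "t \<in> S" for t
    using cSup_upper[OF _ max0(3)] max0(4) that by (force simp: fsec_def)
  moreover have "fsec n W Q (uniform_in n) - fsec n W Q P0 \<in> S"
    using max0(1) unfolding S_def prefix_values_def by (force simp: fsec_def)
  ultimately show ?thesis
    unfolding secrecy_capacity_def S_def[symmetric] by (intro cSup_eq_maximum) auto
qed

theorem corollary1: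
  fixes n :: nat
    and W :: "nat \<Rightarrow> 'y::finite \<Rightarrow> real"
    and Q :: "nat \<Rightarrow> 'z::finite \<Rightarrow> real"
  assumes n_pos: "0 < n"
    and chW: "channel n W" and chQ: "channel n Q"
    and dcss: "dominantly_cyclic_shift_symmetric n W Q"
  shows "(\<forall>\<mu>::real. 0 \<le> \<mu> \<longrightarrow>
           (\<exists>m \<in> prefix_values n W Q \<mu>. (\<forall>t \<in> prefix_values n W Q \<mu>. t \<le> m) \<and>
              bdd_above (rate_split_values n W Q \<mu>) \<and> Sup (rate_split_values n W Q \<mu>) = m))
       \<and> (\<exists>P1 P2. is_dist {0..<n} P1 \<and> is_dist {0..<n} P2 \<and>
              (\<forall>P. is_dist {0..<n} P \<longrightarrow> fsec n W Q P2 \<le> fsec n W Q P \<and> fsec n W Q P \<le> fsec n W Q P1) \<and>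
              secrecy_capacity n W Q = fsec n W Q P1 - fsec n W Q P2)"
proof -
  have "\<exists>m \<in> prefix_values n W Q \<mu>. (\<forall>t \<in> prefix_values n W Q \<mu>. t \<le> m) \<and>
      bdd_above (rate_split_values n W Q \<mu>) \<and> Sup (rate_split_values n W Q \<mu>) = m"
    if \<mu>: "0 \<le> \<mu>" for \<mu>
  proof -
    obtain P0 where P0: "is_dist {0..<n} P0" and min: "\<And>P. is_dist {0..<n} P \<Longrightarrow>
        (\<mu> + 1) * Iin n W P0 - Iin n Q P0 \<le> (\<mu> + 1) * Iin n W P - Iin n Q P"
      using exists_minimizer_Iin_combination[OF n_pos chW chQ] by blast
    from rate_split_values_max[OF chW chQ dcss n_pos \<mu> P0 min] show ?thesis by blast
  qed
  moreover obtain P2 where P2: "is_dist {0..<n} P2"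
    and "\<And>P. is_dist {0..<n} P \<Longrightarrow> 1 * Iin n W P2 - Iin n Q P2 \<le> 1 * Iin n W P - Iin n Q P"
    using exists_minimizer_Iin_combination[OF n_pos chW chQ] by blast
  then have P2_min: "\<And>P. is_dist {0..<n} P \<Longrightarrow> fsec n W Q P2 \<le> fsec n W Q P"
    by (simp add: fsec_def)
  moreover have "\<And>P. is_dist {0..<n} P \<Longrightarrow> fsec n W Q P \<le> fsec n W Q (uniform_in n)"
    using dcss by (simp add: dominantly_cyclic_shift_symmetric_def)
  ultimately show ?thesis
    using uniform_in_is_dist[OF n_pos] secrecy_capacity_eq[OF chW chQ dcss n_pos P2 P2_min] P2
    by blast
qed

end
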